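(* Let $\varepsilon\in[0,1)$ and $\mathcal{P},\mathcal{E}\subseteq\mathcal{D}(P)$. Then $$\beta C_{\mathrm{GPO},\varepsilon}(\mathcal{P},\mathcal{E})=D_{\max,\varepsilon}(\mathcal{P}\|\mathcal{E}).$$
   Context: All Hilbert spaces are finite-dimensional; $\mathcal{D}(P)$ is the set of density operators on $P$; $T(X,Y)=\tfrac12\|X-Y\|_1$; $\mathcal{B}_\varepsilon(\mathcal{P})=\{\omega\in\mathcal{D}:T(\omega,\rho)\le\varepsilon\text{ for some }\rho\in\mathcal{P}\}$. Battery: qubit $B$ with basis $\{|0\rangle,|1\rangle\}$, $\pi_M=(1-\tfrac1M)|0\rangle\langle0|+\tfrac1M|1\rangle\langle1|$ for $M>1$. The one-shot work cost from a clean battery under a class $\mathfrak{F}$ is $\beta C_{\mathfrak{F},\varepsilon}(\mathcal{P},\mathcal{E})=\log\inf\{M>1:\exists\mathcal{F}\in\mathfrak{F},\ \exists(\rho,\tau)\in\mathcal{P}\times\mathcal{E}\text{ with }T(\mathcal{F}(|1\rangle\langle1|),\rho)\le\varepsilon\text{ and }\mathcal{F}(\pi_M)=\tau\}$. GPO here means the class of CPTP maps from $B$ to $P$, Gibbs preservation being the condition $\mathcal{F}(\pi_M)=\tau$. The smoothed max-relative entropy between sets is $D_{\max,\varepsilon}(\mathcal{P}\|\mathcal{E})=\log\inf\{M>1:\tau\in\mathcal{E},\ \omega\in\mathcal{B}_\varepsilon(\mathcal{P}),\ M\tau-\omega\ge0\}$. *)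

theory Defs
  imports "Jordan_Normal_Form.Matrix" "HOL-Library.Complex_Order" "HOL-Library.Extended_Real"
begin

text \<open>Operators on the n-dimensional system P are complex n x n matrices.\<close>

definition mtrace :: "complex mat \<Rightarrow> complex" where
  "mtrace A = (\<Sum>i<dim_row A. A $$ (i, i))"

definition madj :: "complex mat \<Rightarrow> complex mat" where
  "madj A = mat (dim_col A) (dim_row A) (\<lambda>(i, j). cnj (A $$ (j, i)))"

definition psd :: "complex mat \<Rightarrow> bool" where
  "psd A \<longleftrightarrow> A \<in> carrier_mat (dim_row A) (dim_row A) \<and>
     (\<forall>v \<in> carrier_vec (dim_row A). 0 \<le> conjugate v \<bullet> (A *\<^sub>v v))"

definition density :: "nat \<Rightarrow> complex mat set" where
  "density n = {A. A \<in> carrier_mat n n \<and> psd A \<and> mtrace A = 1}"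

text \<open>Trace norm: trace of |X| = sqrt(X* X), the unique psd square root.\<close>
definition trace_norm :: "complex mat \<Rightarrow> real" where
  "trace_norm X = Re (mtrace (THE S. S \<in> carrier_mat (dim_col X) (dim_col X) \<and> psd S \<and> S * S = madj X * X))"

definition tdist :: "complex mat \<Rightarrow> complex mat \<Rightarrow> real" where
  "tdist X Y = trace_norm (X - Y) / 2"

definition eps_ball :: "nat \<Rightarrow> real \<Rightarrow> complex mat set \<Rightarrow> complex mat set" where
  "eps_ball n \<epsilon> PP = {\<omega> \<in> density n. \<exists>\<rho>\<in>PP. tdist \<omega> \<rho> \<le> \<epsilon>}"

text \<open>(id_k \<otimes> F)(X) for X a (k*m) x (k*m) matrix viewed as k x k blocks of m x m matrices.\<close>
definition ext_map :: "nat \<Rightarrow> nat \<Rightarrow> nat \<Rightarrow> (complex mat \<Rightarrow> complex mat) \<Rightarrow> complex mat \<Rightarrow> complex mat" where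
  "ext_map k m n F X = mat (k * n) (k * n) (\<lambda>(r, c).
      F (mat m m (\<lambda>(a, b). X $$ (m * (r div n) + a, m * (c div n) + b))) $$ (r mod n, c mod n))"

definition cptp :: "nat \<Rightarrow> nat \<Rightarrow> (complex mat \<Rightarrow> complex mat) \<Rightarrow> bool" where
  "cptp m n F \<longleftrightarrow>
     (\<forall>X \<in> carrier_mat m m. F X \<in> carrier_mat n n) \<and>
     (\<forall>X \<in> carrier_mat m m. \<forall>Y \<in> carrier_mat m m. \<forall>a b :: complex.
         F (a \<cdot>\<^sub>m X + b \<cdot>\<^sub>m Y) = a \<cdot>\<^sub>m F X + b \<cdot>\<^sub>m F Y) \<and>
     (\<forall>X \<in> carrier_mat m m. mtrace (F X) = mtrace X) \<and>
     (\<forall>k \<ge> 1. \<forall>X \<in> carrier_mat (k * m) (k * m). psd X \<longrightarrow> psd (ext_map k m n F X))"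

definition ket1 :: "complex mat" where
  "ket1 = mat 2 2 (\<lambda>(i, j). if i = 1 \<and> j = 1 then 1 else 0)"

definition piM :: "real \<Rightarrow> complex mat" where
  "piM M = mat 2 2 (\<lambda>(i, j). if i = 0 \<and> j = 0 then complex_of_real (1 - 1 / M)
                          else if i = 1 \<and> j = 1 then complex_of_real (1 / M) else 0)"

definition log_inf :: "real set \<Rightarrow> ereal" where
  "log_inf S = (if S = {} then \<infinity> else ereal (log 2 (Inf S)))"

definition work_cost_GPO :: "nat \<Rightarrow> real \<Rightarrow> complex mat set \<Rightarrow> complex mat set \<Rightarrow> ereal" where
  "work_cost_GPO n \<epsilon> PP EE = log_inf {M. M > 1 \<and> (\<exists>F. cptp 2 n F \<and>
      (\<exists>\<rho>\<in>PP. \<exists>\<tau>\<in>EE. tdist (F ket1) \<rho> \<le> \<epsilon> \<and> F (piM M) = \<tau>))}"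

definition Dmax_eps :: "nat \<Rightarrow> real \<Rightarrow> complex mat set \<Rightarrow> complex mat set \<Rightarrow> ereal" where
  "Dmax_eps n \<epsilon> PP EE = log_inf {M. M > 1 \<and> (\<exists>\<tau>\<in>EE. \<exists>\<omega>\<in>eps_ball n \<epsilon> PP.
      psd (complex_of_real M \<cdot>\<^sub>m \<tau> - \<omega>))}"

end

theory Submission
  imports Defs
begin

(*
  Both sides are logarithms of infima over the same set of M > 1.
  If F is a channel with F(pi_M) = tau, then M tau - F|1><1| = F(M pi_M - |1><1|) = (M - 1) F|0><0|
  is positive, and F|1><1| is a state in the eps-ball around P.  Conversely, if M tau - omega is
  positive for states tau and omega, then sigma = (M tau - omega)/(M - 1) is a state, and the
  measure-and-prepare channel Y |-> <0|Y|0> sigma + <1|Y|1> omega sends |1><1| to omega and pi_M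
  to tau.  Complete positivity of that channel rests on a Gram factorisation
  sigma = sum_l w_l w_l^*, obtained by repeatedly splitting off a rank-one term and passing to
  the Schur complement.
*)

(* Matrices are handled through their entry functions and vectors are arbitrary functions
   nat => complex (only indices below N matter); this makes regrouping indices painless. *)
definition quad_form :: "nat \<Rightarrow> (nat \<Rightarrow> nat \<Rightarrow> complex) \<Rightarrow> (nat \<Rightarrow> complex) \<Rightarrow> complex" where
  "quad_form N S x = (\<Sum>r<N. \<Sum>c<N. cnj (x r) * S r c * x c)"

definition psd_form :: "nat \<Rightarrow> (nat \<Rightarrow> nat \<Rightarrow> complex) \<Rightarrow> bool" where
  "psd_form N S \<longleftrightarrow> (\<forall>x. 0 \<le> quad_form N S x)"

definition schur_compl :: "(nat \<Rightarrow> nat \<Rightarrow> complex) \<Rightarrow> nat \<Rightarrow> nat \<Rightarrow> nat \<Rightarrow> complex" where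
  "schur_compl S i r c = S r c - S r i * S i c / S i i"

lemma sum_if_indep: "(\<Sum>c\<in>A. if P then f c else 0) = (if P then sum f A else 0)"
  by simp

lemma quad_form_unit:
  assumes "i < N"
  shows "quad_form N S (\<lambda>j. if j = i then 1 else 0) = S i i"
proof -
  have "cnj (if r = i then 1 else 0) * S r c * (if c = i then 1 else 0) =
      (if r = i then if c = i then S r c else 0 else 0)" for r c
    by simp
  then show ?thesis
    unfolding quad_form_def using assms by (simp only: sum_if_indep) simp
qed

lemma quad_form_add_unit:
  assumes "i < N"
  shows "quad_form N S (\<lambda>j. x j + (if j = i then t else 0)) =
    quad_form N S x + cnj t * (\<Sum>c<N. S i c * x c) + t * (\<Sum>r<N. cnj (x r) * S r i)
      + cnj t * t * S i i"
proof -
  have "cnj (x r + (if r = i then t else 0)) * S r c * (x c + (if c = i then t else 0)) =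
      cnj (x r) * S r c * x c + (if r = i then cnj t * S i c * x c else 0)
      + (if c = i then cnj (x r) * S r i * t else 0)
      + (if r = i then if c = i then cnj t * S i i * t else 0 else 0)" for r c
    by (auto simp: algebra_simps)
  then show ?thesis
    unfolding quad_form_def using assms
    by (simp only: sum.distrib sum_if_indep) (simp add: sum_distrib_left sum_distrib_right algebra_simps)
qed

lemma quad_form_two_units:
  assumes "i < N" "j < N" "j \<noteq> i"
  shows "quad_form N S (\<lambda>k. (if k = j then 1 else 0) + (if k = i then t else 0)) =
    S j j + cnj t * S i j + t * S j i + cnj t * t * S i i"
proof -
  have "(\<Sum>c<N. S i c * (if c = j then 1 else 0)) = (\<Sum>c<N. if c = j then S i c else 0)"
    "(\<Sum>r<N. cnj (if r = j then 1 else 0) * S r i) = (\<Sum>r<N. if r = j then S r i else 0)"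
    by (intro sum.cong refl; simp)+
  then show ?thesis
    using quad_form_add_unit[OF assms(1), of S "\<lambda>k. if k = j then 1 else 0" t] assms
    by (simp add: quad_form_unit)
qed

lemma quad_form_scale: "quad_form N (\<lambda>r c. a * S r c) x = a * quad_form N S x"
  unfolding quad_form_def by (simp add: sum_distrib_left ac_simps)

lemma quad_form_add: "quad_form N (\<lambda>r c. S r c + T r c) x = quad_form N S x + quad_form N T x"
  unfolding quad_form_def by (simp add: sum.distrib distrib_left distrib_right)

lemma psd_form_diag_nonneg:
  assumes "psd_form N S" "i < N"
  shows "0 \<le> S i i"
  using assms quad_form_unit[of i N S] unfolding psd_form_def by metis

lemma psd_form_hermitian:
  assumes P: "psd_form N S" and r: "r < N" and c: "c < N"
  shows "S c r = cnj (S r c)"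
proof (cases "r = c")
  case True
  then show ?thesis
    using psd_form_diag_nonneg[OF P r] by (simp add: complex_eq_iff less_eq_complex_def)
next
  case False
  have real: "0 \<le> S r r + cnj t * S c r + t * S r c + cnj t * t * S c c" for t
    using P quad_form_two_units[OF c r False, of S t] unfolding psd_form_def by metis
  have "Im (S r r) = 0" "Im (S c c) = 0"
    using psd_form_diag_nonneg[OF P r] psd_form_diag_nonneg[OF P c]
    by (auto simp: less_eq_complex_def)
  with real[of 1] real[of \<i>] show ?thesis
    by (simp add: less_eq_complex_def complex_eq_iff)
qed

lemma psd_form_zero_diag:
  assumes P: "psd_form N S" and i: "i < N" and j: "j < N" and z: "S i i = 0"
  shows "S i j = 0"
proof (rule ccontr)
  define a where "a = S i j"
  assume "S i j \<noteq> 0"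
  then have ji: "j \<noteq> i" and a0: "cmod a > 0" using z a_def by auto
  define u where "u = (Re (S j j) + 1) / (2 * (cmod a)\<^sup>2)"
  define t where "t = - complex_of_real u * a"
  \<comment> \<open>along e_j + t e_i the form is affine in t, so a large t with the phase of -a makes it negative\<close>
  have "quad_form N S (\<lambda>k. (if k = j then 1 else 0) + (if k = i then t else 0)) =
      S j j + cnj t * a + t * cnj a"
    using quad_form_two_units[OF i j ji] psd_form_hermitian[OF P i j] z a_def by simp
  moreover have "0 \<le> quad_form N S (\<lambda>k. (if k = j then 1 else 0) + (if k = i then t else 0))"
    using P unfolding psd_form_def by blast
  moreover have "cnj t * a + t * cnj a = - 2 * complex_of_real u * (a * cnj a)"
    unfolding t_def by (simp add: algebra_simps)
  then have "Re (cnj t * a + t * cnj a) = - 2 * u * (cmod a)\<^sup>2"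
    using cmod_power2[of a] by (simp add: power2_eq_square)
  moreover have "2 * u * (cmod a)\<^sup>2 = Re (S j j) + 1"
    unfolding u_def using a0 by simp
  ultimately show False by (simp add: less_eq_complex_def)
qed

lemma psd_form_schur_compl:
  assumes P: "psd_form N S" and i: "i < N" and nz: "S i i \<noteq> 0"
  shows "psd_form N (schur_compl S i)"
  unfolding psd_form_def
proof
  fix x
  define s where "s = S i i"
  define a where "a = (\<Sum>c<N. S i c * x c)"
  define b where "b = (\<Sum>r<N. cnj (x r) * S r i)"
  have cs: "cnj s = s" using psd_form_hermitian[OF P i i] s_def by simp
  have ba: "b = cnj a" unfolding a_def b_def
    by (simp add: psd_form_hermitian[OF P i] mult.commute)
  have "quad_form N (schur_compl S i) x =
      quad_form N S x - (\<Sum>r<N. \<Sum>c<N. (cnj (x r) * S r i) * (S i c * x c)) / s"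
    unfolding quad_form_def schur_compl_def s_def
    by (simp add: algebra_simps sum_subtractf sum_divide_distrib diff_divide_distrib)
  also have "\<dots> = quad_form N S x - b * a / s"
    unfolding a_def b_def by (simp add: sum_product)
  \<comment> \<open>completing the square: shift x by -(a/s) e_i\<close>
  also have "\<dots> = quad_form N S (\<lambda>j. x j + (if j = i then - a / s else 0))"
    unfolding quad_form_add_unit[OF i] a_def[symmetric] b_def[symmetric] s_def[symmetric]
    using cs nz ba s_def by (simp add: field_simps power2_eq_square)
  finally show "0 \<le> quad_form N (schur_compl S i) x"
    using P unfolding psd_form_def by simp
qed

lemma schur_compl_diag_support:
  assumes P: "psd_form N S" and i: "i < N" and nz: "S i i \<noteq> 0"
  shows "{j. j < N \<and> schur_compl S i j j \<noteq> 0} \<subset> {j. j < N \<and> S j j \<noteq> 0}"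
proof -
  have "{j. j < N \<and> schur_compl S i j j \<noteq> 0} \<subseteq> {j. j < N \<and> S j j \<noteq> 0} - {i}"
  proof
    fix j
    assume "j \<in> {j. j < N \<and> schur_compl S i j j \<noteq> 0}"
    then have j: "j < N" and nzj: "schur_compl S i j j \<noteq> 0" by auto
    have "S j j \<noteq> 0"
    proof
      assume "S j j = 0"
      with psd_form_zero_diag[OF P j i] nzj show False
        unfolding schur_compl_def by simp
    qed
    moreover have "j \<noteq> i"
      using nzj nz unfolding schur_compl_def by auto
    ultimately show "j \<in> {j. j < N \<and> S j j \<noteq> 0} - {i}"
      using j by simp
  qed
  moreover have "i \<in> {j. j < N \<and> S j j \<noteq> 0}"
    using i nz by simp
  ultimately show ?thesis by blast
qed

lemma psd_form_rank_one_factor: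
  assumes P: "psd_form N S" and i: "i < N" and nz: "S i i \<noteq> 0"
  shows "\<exists>v. \<forall>r<N. \<forall>c<N. v r * cnj (v c) = S r i * S i c / S i i"
proof -
  define q where "q = complex_of_real (sqrt (Re (S i i)))"
  have "Re (S i i) > 0" "Im (S i i) = 0"
    using psd_form_diag_nonneg[OF P i] nz by (auto simp: less_eq_complex_def complex_eq_iff)
  then have qq: "q * cnj q = S i i"
    unfolding q_def by (simp add: complex_eq_iff flip: of_real_mult)
  have "S r i / q * cnj (S c i / q) = S r i * S i c / S i i" if "c < N" for r c
    using psd_form_hermitian[OF P i that] qq by (simp flip: qq)
  then show ?thesis by (intro exI[of _ "\<lambda>r. S r i / q"]) blast
qed

lemma psd_form_gram:
  assumes "psd_form N S"
  shows "\<exists>(L::nat) w. \<forall>r<N. \<forall>c<N. S r c = (\<Sum>l<L. w l r * cnj (w l c))"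
  using assms
proof (induction "card {i. i < N \<and> S i i \<noteq> 0}" arbitrary: S rule: less_induct)
  case less
  show ?case
  proof (cases "\<exists>i<N. S i i \<noteq> 0")
    case False
    then have "\<forall>r<N. \<forall>c<N. S r c = 0"
      using psd_form_zero_diag[OF less.prems] by blast
    then show ?thesis by (intro exI[of _ 0]) simp
  next
    case True
    then obtain i where i: "i < N" and nz: "S i i \<noteq> 0" by blast
    have "card {j. j < N \<and> schur_compl S i j j \<noteq> 0} < card {j. j < N \<and> S j j \<noteq> 0}"
      by (rule psubset_card_mono[OF _ schur_compl_diag_support[OF less.prems i nz]]) simp
    from less.hyps[OF this psd_form_schur_compl[OF less.prems i nz]] obtain L w where
      w: "\<forall>r<N. \<forall>c<N. schur_compl S i r c = (\<Sum>l<(L::nat). w l r * cnj (w l c))"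
      by blast
    obtain v where v: "\<forall>r<N. \<forall>c<N. v r * cnj (v c) = S r i * S i c / S i i"
      using psd_form_rank_one_factor[OF less.prems i nz] by blast
    have "S r c = (\<Sum>l<Suc L. (w(L := v)) l r * cnj ((w(L := v)) l c))" if "r < N" "c < N" for r c
    proof -
      have "S r c = schur_compl S i r c + S r i * S i c / S i i"
        by (simp add: schur_compl_def)
      also have "\<dots> = (\<Sum>l<Suc L. (w(L := v)) l r * cnj ((w(L := v)) l c))"
        using w v that by simp
      finally show ?thesis .
    qed
    then have "\<forall>r<N. \<forall>c<N. S r c = (\<Sum>l<Suc L. (w(L := v)) l r * cnj ((w(L := v)) l c))"
      by blast
    then show ?thesis by (intro exI)
  qed
qed

lemma quad_form_vec:
  assumes A: "A \<in> carrier_mat N N" and v: "v \<in> carrier_vec N"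
  shows "conjugate v \<bullet> (A *\<^sub>v v) = quad_form N (\<lambda>r c. A $$ (r, c)) (\<lambda>i. v $ i)"
proof -
  have "conjugate v \<bullet> (A *\<^sub>v v) = (\<Sum>r<N. cnj (v $ r) * (\<Sum>c<N. A $$ (r, c) * v $ c))"
    using A v by (simp add: scalar_prod_def row_def atLeast0LessThan)
  then show ?thesis
    unfolding quad_form_def by (simp add: sum_distrib_left mult.assoc)
qed

lemma psd_iff_psd_form:
  assumes A: "A \<in> carrier_mat N N"
  shows "psd A \<longleftrightarrow> psd_form N (\<lambda>r c. A $$ (r, c))"
proof
  assume "psd A"
  moreover have "quad_form N (\<lambda>r c. A $$ (r, c)) x = conjugate (vec N x) \<bullet> (A *\<^sub>v vec N x)" for x
    unfolding quad_form_vec[OF A vec_carrier] quad_form_def by simp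
  ultimately show "psd_form N (\<lambda>r c. A $$ (r, c))"
    using A unfolding psd_def psd_form_def by auto
next
  assume "psd_form N (\<lambda>r c. A $$ (r, c))"
  then show "psd A"
    unfolding psd_def psd_form_def using A quad_form_vec[OF A] by auto
qed

lemma psd_add:
  assumes A: "A \<in> carrier_mat N N" and B: "B \<in> carrier_mat N N" and "psd A" "psd B"
  shows "psd (A + B)"
proof -
  have "quad_form N (\<lambda>r c. (A + B) $$ (r, c)) x = quad_form N (\<lambda>r c. A $$ (r, c) + B $$ (r, c)) x" for x
    unfolding quad_form_def using A B by (intro sum.cong refl) auto
  then show ?thesis
    using assms unfolding psd_iff_psd_form[OF add_carrier_mat[OF B]] psd_iff_psd_form[OF A]
      psd_iff_psd_form[OF B] psd_form_def by (simp add: quad_form_add add_nonneg_nonneg)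
qed

lemma psd_smult:
  assumes A: "A \<in> carrier_mat N N" and "psd A" "0 \<le> a"
  shows "psd (a \<cdot>\<^sub>m A)"
proof -
  have "quad_form N (\<lambda>r c. (a \<cdot>\<^sub>m A) $$ (r, c)) x = quad_form N (\<lambda>r c. a * A $$ (r, c)) x" for x
    unfolding quad_form_def using A by (intro sum.cong refl) auto
  then show ?thesis
    using assms unfolding psd_iff_psd_form[OF smult_carrier_mat[OF A]] psd_iff_psd_form[OF A]
      psd_form_def by (simp add: quad_form_scale mult_nonneg_nonneg)
qed

lemma psd_diagonal:
  assumes "\<forall>i<N. 0 \<le> d i"
  shows "psd (mat N N (\<lambda>(i, j). if i = j then d i else 0))"
proof -
  have "quad_form N (\<lambda>r c. mat N N (\<lambda>(i, j). if i = j then d i else 0) $$ (r, c)) x =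
      (\<Sum>r<N. d r * (cnj (x r) * x r))" for x
    unfolding quad_form_def by (intro sum.cong) (auto simp: if_distrib if_distribR cong: if_cong)
  moreover have "0 \<le> d r * (cnj (x r) * x r)" if "r < N" for r x
    by (rule mult_nonneg_nonneg) (use assms that in \<open>auto simp: less_eq_complex_def\<close>)
  ultimately show ?thesis
    unfolding psd_iff_psd_form[OF mat_carrier] psd_form_def by (auto intro!: sum_nonneg)
qed

lemma quad_form_pushforward:
  fixes z :: "nat \<Rightarrow> complex"
  assumes g: "\<forall>r<N. g r < K"
  shows "(\<Sum>r<N. \<Sum>c<N. cnj (z r) * T (g r) (g c) * z c) =
    quad_form K T (\<lambda>a. \<Sum>r | r < N \<and> g r = a. z r)"
proof -
  have gi: "g ` {..<N} \<subseteq> {..<K}" using g by auto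
  have prod: "cnj (sum z A) * t * sum z B = (\<Sum>r\<in>A. \<Sum>c\<in>B. cnj (z r) * t * z c)" for A B t
    by (simp add: sum_distrib_right sum_distrib_left) (rule sum.swap)
  have inner: "(\<Sum>b<K. \<Sum>c | c \<in> {..<N} \<and> g c = b. cnj (z r) * T (g r) (g c) * z c)
      = (\<Sum>c<N. cnj (z r) * T (g r) (g c) * z c)" for r
    by (rule sum.group[OF finite_lessThan finite_lessThan gi])
  have "quad_form K T (\<lambda>a. \<Sum>r | r < N \<and> g r = a. z r)
     = (\<Sum>a<K. \<Sum>b<K. \<Sum>r | r \<in> {..<N} \<and> g r = a. \<Sum>c | c \<in> {..<N} \<and> g c = b.
          cnj (z r) * T a b * z c)"
    unfolding quad_form_def prod by simp
  also have "\<dots> = (\<Sum>a<K. \<Sum>r | r \<in> {..<N} \<and> g r = a. \<Sum>b<K. \<Sum>c | c \<in> {..<N} \<and> g c = b.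
          cnj (z r) * T (g r) (g c) * z c)"
    by (subst sum.swap) (intro sum.cong refl, auto)
  also have "\<dots> = (\<Sum>r<N. \<Sum>c<N. cnj (z r) * T (g r) (g c) * z c)"
    unfolding inner by (rule sum.group[OF finite_lessThan finite_lessThan gi])
  finally show ?thesis by simp
qed

lemma ext_map_carrier: "ext_map k m n F X \<in> carrier_mat (k * n) (k * n)"
  unfolding ext_map_def by simp

lemma ext_map_one:
  assumes "X \<in> carrier_mat m m" "F X \<in> carrier_mat n n"
  shows "ext_map 1 m n F X = F X"
proof -
  have "mat m m (($$) X) = X"
    using assms(1) by (intro eq_matI) auto
  then show ?thesis
    unfolding ext_map_def using assms(2) by (intro eq_matI) auto
qed

lemma ext_map_add:
  assumes "\<And>Y. F Y \<in> carrier_mat n n" "\<And>Y. G Y \<in> carrier_mat n n"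
  shows "ext_map k m n (\<lambda>Y. F Y + G Y) X = ext_map k m n F X + ext_map k m n G X"
proof (rule eq_matI)
  fix r c
  assume "r < dim_row (ext_map k m n F X + ext_map k m n G X)"
    and "c < dim_col (ext_map k m n F X + ext_map k m n G X)"
  then have rc: "r < k * n" "c < k * n" by (simp_all add: ext_map_def)
  then have "n > 0" by (cases n) auto
  moreover have "dim_row (F Y) = n" "dim_col (F Y) = n" "dim_row (G Y) = n" "dim_col (G Y) = n" for Y
    using assms[of Y] by auto
  ultimately show "ext_map k m n (\<lambda>Y. F Y + G Y) X $$ (r, c) =
      (ext_map k m n F X + ext_map k m n G X) $$ (r, c)"
    unfolding ext_map_def using rc by simp
qed (simp_all add: ext_map_def)

lemma psd_ext_map_diag_prepare:
  assumes a: "a < m" and \<sigma>: "\<sigma> \<in> carrier_mat n n" "psd \<sigma>"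
    and X: "X \<in> carrier_mat (k * m) (k * m)" "psd X"
  shows "psd (ext_map k m n (\<lambda>Y. Y $$ (a, a) \<cdot>\<^sub>m \<sigma>) X)"
proof -
  let ?E = "ext_map k m n (\<lambda>Y. Y $$ (a, a) \<cdot>\<^sub>m \<sigma>) X"
  define g where "g r = m * (r div n) + a" for r
  have g: "\<forall>r<k * n. g r < k * m"
  proof (intro allI impI)
    fix r assume "r < k * n"
    then have "r div n < k"
      by (simp add: less_mult_imp_div_less)
    then have "m * (r div n + 1) \<le> m * k"
      by (intro mult_le_mono2) simp
    with a show "g r < k * m" unfolding g_def by (simp add: algebra_simps)
  qed
  obtain L w where w: "\<forall>i<n. \<forall>j<n. \<sigma> $$ (i, j) = (\<Sum>l<(L::nat). w l i * cnj (w l j))"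
    using psd_form_gram \<sigma> psd_iff_psd_form by blast
  have "0 \<le> quad_form (k * n) (\<lambda>r c. ?E $$ (r, c)) x" for x
  proof -
    \<comment> \<open>\<sigma> = sum_l w_l w_l^*, so the form of ?E at x is a sum of forms of X, one per Gram vector\<close>
    define z where "z l r = x r * cnj (w l (r mod n))" for l r
    have entry: "cnj (x r) * ?E $$ (r, c) * x c = (\<Sum>l<L. cnj (z l r) * X $$ (g r, g c) * z l c)"
      if "r < k * n" "c < k * n" for r c
    proof -
      have "n > 0" using that by (cases n) auto
      then have "?E $$ (r, c) = X $$ (g r, g c) * \<sigma> $$ (r mod n, c mod n)"
        unfolding ext_map_def g_def using that a \<sigma>(1) by simp
      then show ?thesis
        unfolding z_def using w \<open>n > 0\<close> by (simp add: sum_distrib_left sum_distrib_right algebra_simps)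
    qed
    have "quad_form (k * n) (\<lambda>r c. ?E $$ (r, c)) x =
        (\<Sum>r<k * n. \<Sum>c<k * n. \<Sum>l<L. cnj (z l r) * X $$ (g r, g c) * z l c)"
      unfolding quad_form_def by (intro sum.cong refl) (simp add: entry)
    also have "\<dots> = (\<Sum>r<k * n. \<Sum>l<L. \<Sum>c<k * n. cnj (z l r) * X $$ (g r, g c) * z l c)"
      by (intro sum.cong refl sum.swap)
    also have "\<dots> = (\<Sum>l<L. \<Sum>r<k * n. \<Sum>c<k * n. cnj (z l r) * X $$ (g r, g c) * z l c)"
      by (rule sum.swap)
    also have "\<dots> = (\<Sum>l<L. quad_form (k * m) (\<lambda>a b. X $$ (a, b))
        (\<lambda>a. \<Sum>r | r < k * n \<and> g r = a. z l r))"
      by (simp only: quad_form_pushforward[OF g, where T = "\<lambda>a b. X $$ (a, b)"])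
    finally show ?thesis
      using X psd_iff_psd_form by (simp add: psd_form_def sum_nonneg)
  qed
  then show ?thesis
    using psd_iff_psd_form[OF ext_map_carrier] psd_form_def by blast
qed

lemma cptp_carrier: "cptp m n F \<Longrightarrow> X \<in> carrier_mat m m \<Longrightarrow> F X \<in> carrier_mat n n"
  unfolding cptp_def by blast

lemma cptp_psd:
  assumes F: "cptp m n F" and X: "X \<in> carrier_mat m m" "psd X"
  shows "psd (F X)"
proof -
  have "psd (ext_map 1 m n F X)" using F X unfolding cptp_def by auto
  then show ?thesis using ext_map_one[where F = F, OF X(1) cptp_carrier[OF F X(1)]] by simp
qed

lemma cptp_density:
  assumes "cptp m n F" "X \<in> density m"
  shows "F X \<in> density n"
  using assms cptp_psd[OF assms(1)] unfolding density_def cptp_def by auto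

lemma ket1_carrier: "ket1 \<in> carrier_mat 2 2"
  unfolding ket1_def by simp

lemma piM_carrier: "piM M \<in> carrier_mat 2 2"
  unfolding piM_def by simp

lemma ket1_density: "ket1 \<in> density 2"
proof -
  have ket1_diagonal: "ket1 = mat 2 2 (\<lambda>(i, j). if i = j then if i = 1 then 1 else 0 else 0)"
    by (intro eq_matI) (auto simp: ket1_def)
  have "psd ket1"
    unfolding ket1_diagonal by (rule psd_diagonal) (simp add: less_eq_complex_def)
  moreover have "mtrace ket1 = 1"
    unfolding mtrace_def ket1_def by (simp add: numeral_2_eq_2)
  ultimately show ?thesis
    unfolding density_def using ket1_carrier by simp
qed

lemma cptp_measure_prepare:
  assumes \<sigma>: "\<sigma> \<in> density n" and \<omega>: "\<omega> \<in> density n"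
  shows "cptp 2 n (\<lambda>Y. Y $$ (0, 0) \<cdot>\<^sub>m \<sigma> + Y $$ (1, 1) \<cdot>\<^sub>m \<omega>)"
  unfolding cptp_def
proof (intro conjI ballI allI impI)
  have \<sigma>c: "\<sigma> \<in> carrier_mat n n" and \<omega>c: "\<omega> \<in> carrier_mat n n"
    using \<sigma> \<omega> unfolding density_def by auto
  show "Y $$ (0, 0) \<cdot>\<^sub>m \<sigma> + Y $$ (1, 1) \<cdot>\<^sub>m \<omega> \<in> carrier_mat n n" for Y
    using \<sigma>c \<omega>c by simp
  fix X :: "complex mat"
  {
    fix Y :: "complex mat" and a b :: complex
    assume "X \<in> carrier_mat 2 2" "Y \<in> carrier_mat 2 2"
    then show "(a \<cdot>\<^sub>m X + b \<cdot>\<^sub>m Y) $$ (0, 0) \<cdot>\<^sub>m \<sigma> + (a \<cdot>\<^sub>m X + b \<cdot>\<^sub>m Y) $$ (1, 1) \<cdot>\<^sub>m \<omega> =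
        a \<cdot>\<^sub>m (X $$ (0, 0) \<cdot>\<^sub>m \<sigma> + X $$ (1, 1) \<cdot>\<^sub>m \<omega>) + b \<cdot>\<^sub>m (Y $$ (0, 0) \<cdot>\<^sub>m \<sigma> + Y $$ (1, 1) \<cdot>\<^sub>m \<omega>)"
      using \<sigma>c \<omega>c by (intro eq_matI) (auto simp: algebra_simps)
  next
    assume X: "X \<in> carrier_mat 2 2"
    have "mtrace (X $$ (0, 0) \<cdot>\<^sub>m \<sigma> + X $$ (1, 1) \<cdot>\<^sub>m \<omega>) = X $$ (0, 0) * mtrace \<sigma> + X $$ (1, 1) * mtrace \<omega>"
      unfolding mtrace_def using \<sigma>c \<omega>c by (simp add: sum.distrib sum_distrib_left)
    also have "\<dots> = mtrace X"
      using \<sigma> \<omega> X unfolding density_def mtrace_def by (simp add: numeral_2_eq_2)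
    finally show "mtrace (X $$ (0, 0) \<cdot>\<^sub>m \<sigma> + X $$ (1, 1) \<cdot>\<^sub>m \<omega>) = mtrace X" .
  next
    fix k :: nat
    assume "X \<in> carrier_mat (k * 2) (k * 2)" "psd X"
    then have "psd (ext_map k 2 n (\<lambda>Y. Y $$ (0, 0) \<cdot>\<^sub>m \<sigma>) X)"
        "psd (ext_map k 2 n (\<lambda>Y. Y $$ (1, 1) \<cdot>\<^sub>m \<omega>) X)"
      using \<sigma> \<omega> \<sigma>c \<omega>c unfolding density_def by (auto intro: psd_ext_map_diag_prepare)
    moreover have "ext_map k 2 n (\<lambda>Y. Y $$ (0, 0) \<cdot>\<^sub>m \<sigma> + Y $$ (1, 1) \<cdot>\<^sub>m \<omega>) X =
        ext_map k 2 n (\<lambda>Y. Y $$ (0, 0) \<cdot>\<^sub>m \<sigma>) X + ext_map k 2 n (\<lambda>Y. Y $$ (1, 1) \<cdot>\<^sub>m \<omega>) X"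
      using \<sigma>c \<omega>c by (intro ext_map_add) auto
    ultimately show "psd (ext_map k 2 n (\<lambda>Y. Y $$ (0, 0) \<cdot>\<^sub>m \<sigma> + Y $$ (1, 1) \<cdot>\<^sub>m \<omega>) X)"
      by (metis psd_add ext_map_carrier)
  }
qed

lemma gibbs_preserving_imp_psd:
  assumes M: "M > 1" and F: "cptp 2 n F"
  shows "psd (complex_of_real M \<cdot>\<^sub>m F (piM M) - F ket1)"
proof -
  let ?D = "mat 2 2 (\<lambda>(i, j). if i = j then if i = 0 then complex_of_real (M - 1) else 0 else 0)"
  have "?D = complex_of_real M \<cdot>\<^sub>m piM M + (-1) \<cdot>\<^sub>m ket1"
    using M unfolding piM_def ket1_def by (intro eq_matI) (auto simp: field_simps less_Suc_eq)
  then have "F ?D = complex_of_real M \<cdot>\<^sub>m F (piM M) + (-1) \<cdot>\<^sub>m F ket1"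
    using F piM_carrier ket1_carrier unfolding cptp_def by metis
  also have "\<dots> = complex_of_real M \<cdot>\<^sub>m F (piM M) - F ket1"
    using cptp_carrier[OF F piM_carrier] cptp_carrier[OF F ket1_carrier] by (intro eq_matI) auto
  finally have FD: "F ?D = complex_of_real M \<cdot>\<^sub>m F (piM M) - F ket1" .
  have D: "psd ?D"
    using M by (intro psd_diagonal) (auto simp: less_eq_complex_def)
  have "psd (F ?D)"
    using cptp_psd[OF F _ D] by simp
  with FD show ?thesis by simp
qed

lemma psd_imp_gibbs_preserving:
  assumes M: "M > 1" and \<tau>: "\<tau> \<in> density n" and \<omega>: "\<omega> \<in> density n"
    and D: "psd (complex_of_real M \<cdot>\<^sub>m \<tau> - \<omega>)"
  shows "\<exists>F. cptp 2 n F \<and> F ket1 = \<omega> \<and> F (piM M) = \<tau>"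
proof -
  have \<tau>c: "\<tau> \<in> carrier_mat n n" and \<omega>c: "\<omega> \<in> carrier_mat n n"
    using \<tau> \<omega> unfolding density_def by auto
  define \<sigma> where "\<sigma> = complex_of_real (1 / (M - 1)) \<cdot>\<^sub>m (complex_of_real M \<cdot>\<^sub>m \<tau> - \<omega>)"
  have \<sigma>c: "\<sigma> \<in> carrier_mat n n"
    unfolding \<sigma>_def using \<omega>c by (intro smult_carrier_mat minus_carrier_mat)
  have "mtrace \<sigma> = (\<Sum>i<n. complex_of_real (1 / (M - 1)) *
      (complex_of_real M * \<tau> $$ (i, i) - \<omega> $$ (i, i)))"
    unfolding mtrace_def \<sigma>_def using \<tau>c \<omega>c by (intro sum.cong) auto
  also have "\<dots> = complex_of_real (1 / (M - 1)) * (complex_of_real M * mtrace \<tau> - mtrace \<omega>)"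
    unfolding mtrace_def using \<tau>c \<omega>c by (simp add: sum_distrib_left sum_subtractf algebra_simps)
  also have "\<dots> = 1"
    using \<tau> \<omega> M unfolding density_def by (simp add: field_simps)
  finally have "mtrace \<sigma> = 1" .
  moreover have "psd \<sigma>"
    unfolding \<sigma>_def using M
    by (intro psd_smult[OF minus_carrier_mat[OF \<omega>c] D]) (simp add: less_eq_complex_def)
  ultimately have "\<sigma> \<in> density n"
    unfolding density_def using \<sigma>c by simp
  moreover have "ket1 $$ (0, 0) \<cdot>\<^sub>m \<sigma> + ket1 $$ (1, 1) \<cdot>\<^sub>m \<omega> = \<omega>"
    unfolding ket1_def using \<sigma>c \<omega>c by (intro eq_matI) auto
  moreover have "piM M $$ (0, 0) \<cdot>\<^sub>m \<sigma> + piM M $$ (1, 1) \<cdot>\<^sub>m \<omega> = \<tau>"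
  proof -
    have "complex_of_real M \<noteq> 0" "complex_of_real M - 1 \<noteq> 0"
      using M by auto
    then show ?thesis
      unfolding piM_def \<sigma>_def using \<tau>c \<omega>c by (intro eq_matI) (auto simp: field_simps)
  qed
  ultimately show ?thesis
    using cptp_measure_prepare[OF _ \<omega>] by blast
qed

theorem theorem5:
  fixes n :: nat and \<epsilon> :: real and PP EE :: "complex mat set"
  assumes "0 \<le> \<epsilon>" and "\<epsilon> < 1"
    and "PP \<subseteq> density n" and "EE \<subseteq> density n"
  shows "work_cost_GPO n \<epsilon> PP EE = Dmax_eps n \<epsilon> PP EE"
proof -
  have "M > 1 \<and> (\<exists>F. cptp 2 n F \<and> (\<exists>\<rho>\<in>PP. \<exists>\<tau>\<in>EE. tdist (F ket1) \<rho> \<le> \<epsilon> \<and> F (piM M) = \<tau>))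
    \<longleftrightarrow> M > 1 \<and> (\<exists>\<tau>\<in>EE. \<exists>\<omega>\<in>eps_ball n \<epsilon> PP. psd (complex_of_real M \<cdot>\<^sub>m \<tau> - \<omega>))"
    (is "?A \<longleftrightarrow> ?B") for M
  proof
    assume ?A
    then obtain F \<rho> where M: "M > 1" and F: "cptp 2 n F" and "\<rho> \<in> PP" "F (piM M) \<in> EE"
      "tdist (F ket1) \<rho> \<le> \<epsilon>" by blast
    moreover have "F ket1 \<in> eps_ball n \<epsilon> PP"
      unfolding eps_ball_def using cptp_density[OF F ket1_density] calculation by blast
    ultimately show ?B
      using gibbs_preserving_imp_psd[OF M F] by blast
  next
    assume ?B
    then obtain \<tau> \<omega> \<rho> where "M > 1" "\<tau> \<in> EE" "\<omega> \<in> density n" "\<rho> \<in> PP" "tdist \<omega> \<rho> \<le> \<epsilon>"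
      "psd (complex_of_real M \<cdot>\<^sub>m \<tau> - \<omega>)" unfolding eps_ball_def by blast
    with psd_imp_gibbs_preserving[of M \<tau> n \<omega>] assms(4) show ?A by blast
  qed
  then show ?thesis
    unfolding work_cost_GPO_def Dmax_eps_def by simp
qed

end
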